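(* Let $a\ge3$, let $H=G_0\times\cdots\times G_{i-1}\times H_i\times G_{i+1}\times\cdots\times G_k\in\mathfrak{H}$ (notation in context), and let $n$ be a positive integer with $\gcd(n,a)=1$. Let $\mathcal{P}$ be the sequence of prime factors of $n$ counted with multiplicity, let $\mathcal{T}$ be the subsequence of primes $r$ in $\mathcal{P}$ with $r\bmod a\notin H$, and let $t$ be the length of $\mathcal{T}$. Suppose the set of residues modulo $a$ of the elements of $\mathcal{P}$ contains $H$. (i) If $t\ge2^{m-1}$, then $n\notin\mathcal{E}^*_a$. (ii) Suppose $t=2^{m-1}-1$ and $m\ge2$ (in this case necessarily $\gamma_0\le1$, so $G_0$ is trivial and $1\le i\le k$). Fix a primitive root $g$ modulo $p_i^{\gamma_i}$. Then $n\in\mathcal{E}^*_a$ if and only if there exists an odd integer $e$ such that every prime $r$ in $\mathcal{T}$ satisfies $r\equiv g^{e'}\pmod{p_i^{\gamma_i}}$ for some integer $e'$ with $e'\equiv e$ or $e'\equiv -e\pmod{2^m}$.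
   Context: Let $a\ge3$ have canonical factorization $a=2^{\gamma_0}p_1^{\gamma_1}\cdots p_k^{\gamma_k}$ ($p_i$ distinct odd primes). Let $G=(\mathbb{Z}/a\mathbb{Z})^*$, identified by the Chinese remainder theorem with $G_0\times G_1\times\cdots\times G_k$, where $G_0=(\mathbb{Z}/2^{\gamma_0}\mathbb{Z})^*$ and $G_i=(\mathbb{Z}/p_i^{\gamma_i}\mathbb{Z})^*$. For $1\le i\le k$ let $H_i$ be the unique maximal subgroup of the cyclic group $G_i$ not containing $-1$ (its subgroup of odd order); its index is $2^{m_i}$ where $2^{m_i}\|p_i-1$. Let $H_0=G_0$ (trivial) if $\gamma_0\le1$; if $\gamma_0\ge2$, $H_0$ denotes any subgroup of $G_0$ of index $2$ not containing $-1\bmod 2^{\gamma_0}$. Let $\delta=0$ if $\gamma_0\le1$ and $\delta=2$ if $\gamma_0\ge2$, and define $m\ge1$ by $2^m\|\gcd(\delta,p_1-1,\dots,p_k-1)$. Let $\mathfrak{H}$ be the set of subgroups of $G$ of the form $G_0\times\cdots\times G_{i-1}\times H_i\times G_{i+1}\times\cdots\times G_k$ ($0\le i\le k$, any allowed choice of $H_0$ when $i=0$) with index $[G:H]=2^m$. For a positive integer $n$, $R(n;a)$ is the number of pairs $(x,y)$ of positive integers with $\frac an=\frac1x+\frac1y$, and $\mathcal{E}^*_a=\{n\in\mathbb{N}:R(n;a)=0,\ \gcd(n,a)=1\}$. *)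

theory Defs
  imports "HOL-Number_Theory.Number_Theory"
begin

definition units_mod :: "nat \<Rightarrow> nat set" where
  "units_mod a = {x. x < a \<and> coprime x a}"

definition gamma0 :: "nat \<Rightarrow> nat" where
  "gamma0 a = multiplicity 2 a"

definition delta_of :: "nat \<Rightarrow> nat" where
  "delta_of a = (if gamma0 a \<le> 1 then 0 else 2)"

definition m_of :: "nat \<Rightarrow> nat" where
  "m_of a = multiplicity 2
     (Gcd ({delta_of a} \<union> {p - 1 | p. prime p \<and> odd p \<and> p dvd a}))"

definition ppart :: "nat \<Rightarrow> nat \<Rightarrow> nat" where
  "ppart a p = p ^ multiplicity p a"

text \<open>For an odd prime p = p_i dividing a: the subgroup
  G_0 x ... x H_i x ... x G_k, where H_i is the subgroup of odd order of
  G_i = (Z/p_i^gamma_i Z)^*, i.e. its elements of odd order.\<close>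

definition H_odd :: "nat \<Rightarrow> nat \<Rightarrow> nat set" where
  "H_odd a p = {x \<in> units_mod a. odd (ord (ppart a p) x)}"

definition admissible_H0 :: "nat \<Rightarrow> nat set \<Rightarrow> bool" where
  "admissible_H0 a S \<longleftrightarrow>
     (let q = 2 ^ gamma0 a in
       S \<subseteq> units_mod q \<and> 1 \<in> S \<and>
       (\<forall>x\<in>S. \<forall>y\<in>S. (x * y) mod q \<in> S) \<and>
       2 * card S = totient q \<and> q - 1 \<notin> S)"

definition frakH :: "nat \<Rightarrow> nat set set" where
  "frakH a =
     {H. totient a = 2 ^ m_of a * card H \<and>
         ((\<exists>p. prime p \<and> odd p \<and> p dvd a \<and> H = H_odd a p) \<or>
          (gamma0 a \<ge> 2 \<and> (\<exists>S. admissible_H0 a S \<and>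
              H = {x \<in> units_mod a. x mod 2 ^ gamma0 a \<in> S})))}"

definition R :: "nat \<Rightarrow> nat \<Rightarrow> nat" where
  "R n a = card {(x, y). x > 0 \<and> y > 0 \<and>
      (of_nat a / of_nat n :: rat) = 1 / of_nat x + 1 / of_nat y}"

definition Estar :: "nat \<Rightarrow> nat set" where
  "Estar a = {n. n > 0 \<and> R n a = 0 \<and> gcd n a = 1}"

definition cong_gpow :: "nat \<Rightarrow> nat \<Rightarrow> int \<Rightarrow> nat \<Rightarrow> bool" where
  "cong_gpow q g e r \<longleftrightarrow>
     (if e \<ge> 0 then [r = g ^ nat e] (mod q) else [r * g ^ nat (- e) = 1] (mod q))"

end

theory Submission
  imports Defs
begin

lemma egyptian_eq_iff:
  fixes a n x y :: nat
  assumes "x > 0" "y > 0" "n > 0"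
  shows "(of_nat a / of_nat n :: rat) = 1 / of_nat x + 1 / of_nat y \<longleftrightarrow> a * x * y = n * (x + y)"
proof -
  have "(of_nat a / of_nat n :: rat) = 1 / of_nat x + 1 / of_nat y \<longleftrightarrow>
        (of_nat (a * x * y) :: rat) = of_nat (n * (x + y))"
    using assms by (simp add: field_simps)
  then show ?thesis
    by (simp only: of_nat_eq_iff)
qed

lemma egyptian_solution_le:
  fixes a n x y :: nat
  assumes "a \<ge> 1" "x > 0" "y > 0" and eq: "a * x * y = n * (x + y)"
  shows "x \<le> n * n + n"
proof -
  have less: "n < a * u" if "a * u * w = n * (u + w)" "u > 0" "w > 0" for u w
  proof (rule ccontr)
    assume "\<not> n < a * u"
    then have "a * u * w \<le> n * w"
      by (simp add: mult_right_mono)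
    with that assms(1) show False
      by (simp add: algebra_simps)
  qed
  have x: "int n < int a * int x"
    using less[OF eq assms(2,3)] by (simp flip: of_nat_mult)
  have y: "int n < int a * int y"
    using less[of y x] eq assms(2,3) by (simp add: algebra_simps flip: of_nat_mult)
  have "(int a * int x - int n) * (int a * int y - int n) = int a * (int (a * x * y) - int (n * (x + y))) + int n * int n"
    by (simp add: algebra_simps)
  also have "\<dots> = int n * int n"
    using eq by simp
  finally have prod: "(int a * int x - int n) * (int a * int y - int n) = int n * int n" .
  moreover have "int a * int x - int n \<le> (int a * int x - int n) * (int a * int y - int n)"
    using x y by (simp add: mult_le_cancel_left1)
  ultimately have "int a * int x - int n \<le> int n * int n"
    by simp
  moreover have "int x \<le> int a * int x"
    using assms(1) by (simp add: mult_le_cancel_right1)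
  ultimately have "int x \<le> int n * int n + int n"
    by linarith
  then show ?thesis
    by (simp flip: of_nat_mult of_nat_add)
qed

lemma R_ne_0_iff:
  fixes a n :: nat
  assumes "a \<ge> 1" "n > 0"
  shows "R n a \<noteq> 0 \<longleftrightarrow> (\<exists>x y. x > 0 \<and> y > 0 \<and> a * x * y = n * (x + y))"
proof -
  let ?S = "{(x, y). x > 0 \<and> y > 0 \<and> a * x * y = n * (x + y)}"
  have S: "{(x, y). x > 0 \<and> y > 0 \<and> (of_nat a / of_nat n :: rat) = 1 / of_nat x + 1 / of_nat y} = ?S"
    using assms(2) by (simp add: egyptian_eq_iff cong: conj_cong)
  have "?S \<subseteq> {..n * n + n} \<times> {..n * n + n}"
  proof clarsimp
    fix x y assume "x > 0" "y > 0" "a * x * y = n * (x + y)"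
    then show "x \<le> n * n + n \<and> y \<le> n * n + n"
      using egyptian_solution_le[OF assms(1), of x y] egyptian_solution_le[OF assms(1), of y x]
      by (simp add: ac_simps)
  qed
  then have "finite ?S"
    by (rule finite_subset) simp
  then show ?thesis
    unfolding R_def S by auto
qed

lemma solution_imp_divisors:
  fixes a n x y :: nat
  assumes "x > 0" "y > 0" and eq: "a * x * y = n * (x + y)" and "coprime n a"
  shows "\<exists>d1 d2. d1 dvd n \<and> d2 dvd n \<and> a dvd d1 + d2"
proof -
  define g where "g = gcd x y"
  define u w where "u = x div g" and "w = y div g"
  have "g > 0"
    using assms(1) g_def by simp
  have x: "x = g * u" and y: "y = g * w"
    unfolding u_def w_def g_def by simp_all
  have "coprime u w"
    unfolding u_def w_def g_def using assms(1) by (intro div_gcd_coprime) auto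
  have "g * (a * g * u * w) = g * (n * (u + w))"
    using eq unfolding x y by (simp add: algebra_simps)
  with \<open>g > 0\<close> have eq': "a * g * u * w = n * (u + w)"
    by simp
  have "gcd u (u + w) = 1" "gcd w (u + w) = 1"
    using \<open>coprime u w\<close> by (simp_all add: gcd.commute[of w "u + w"])
  then have "coprime u (u + w)" "coprime w (u + w)"
    by (simp_all only: coprime_iff_gcd_eq_1)
  then have "coprime (u * w) (u + w)"
    by simp
  moreover have "n * (u + w) = (u * w) * (a * g)"
    using eq' by (simp add: ac_simps)
  then have "u * w dvd n * (u + w)" ..
  ultimately have "u * w dvd n"
    by (simp add: coprime_dvd_mult_left_iff)
  then obtain k where n: "n = u * w * k" ..
  have "u * w > 0"
    using assms(1,2) x y by simp
  moreover have "(u * w) * (a * g) = (u * w) * (k * (u + w))"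
    using eq' unfolding n by (simp add: ac_simps)
  ultimately have "a * g = k * (u + w)"
    by simp
  moreover have "coprime a k"
    using \<open>coprime n a\<close> unfolding n by (simp add: coprime_commute)
  ultimately have "a dvd u + w"
    by (metis coprime_dvd_mult_right_iff dvdI)
  moreover have "u dvd n" "w dvd n"
    unfolding n by simp_all
  ultimately show ?thesis
    by blast
qed

lemma divisors_imp_solution:
  fixes a n d1 d2 :: nat
  assumes "n > 0" and "d1 dvd n" "d2 dvd n" "a dvd d1 + d2"
  shows "\<exists>x y. x > 0 \<and> y > 0 \<and> a * x * y = n * (x + y)"
proof -
  obtain u where n1: "n = d1 * u"
    using assms(2) by (rule dvdE)
  obtain w where n2: "n = d2 * w"
    using assms(3) by (rule dvdE)
  obtain c where c: "d1 + d2 = a * c"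
    using assms(4) by (rule dvdE)
  have "d1 * u > 0" "d2 * w > 0"
    using assms(1) by (simp_all only: n1[symmetric] n2[symmetric])
  then have pos: "u > 0" "w > 0" "d1 > 0" "d2 > 0"
    by simp_all
  then have "c > 0"
    using c by (cases c) auto
  have "a * (u * c) * (w * c) = c * ((d1 + d2) * u * w)"
    using c by (simp add: algebra_simps)
  also have "\<dots> = c * ((d1 * u) * w + (d2 * w) * u)"
    by (simp add: algebra_simps)
  also have "\<dots> = n * (u * c + w * c)"
    unfolding n1[symmetric] n2[symmetric] by (simp add: algebra_simps)
  finally show ?thesis
    using pos \<open>c > 0\<close> by (intro exI[of _ "u * c"] exI[of _ "w * c"]) simp
qed

lemma not_in_Estar_iff:
  fixes a n :: nat
  assumes "a \<ge> 1" "n > 0" "coprime n a"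
  shows "n \<notin> Estar a \<longleftrightarrow> (\<exists>d1 d2. d1 dvd n \<and> d2 dvd n \<and> a dvd d1 + d2)"
proof -
  have "gcd n a = 1"
    using assms(3) by (rule coprime_iff_gcd_eq_1[THEN iffD1])
  then have "n \<notin> Estar a \<longleftrightarrow> (\<exists>x y. x > 0 \<and> y > 0 \<and> a * x * y = n * (x + y))"
    using assms(2) R_ne_0_iff[OF assms(1,2)] by (simp add: Estar_def)
  also have "\<dots> \<longleftrightarrow> (\<exists>d1 d2. d1 dvd n \<and> d2 dvd n \<and> a dvd d1 + d2)"
    using solution_imp_divisors[of _ _ a n] divisors_imp_solution[OF assms(2), of _ _ a] assms(3)
    by meson
  finally show ?thesis .
qed

definition signed_subsum :: "int multiset \<Rightarrow> int \<Rightarrow> bool" where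
  "signed_subsum X s \<longleftrightarrow> (\<exists>A B. A + B \<subseteq># X \<and> s = \<Sum>\<^sub># A - \<Sum>\<^sub># B)"

lemma signed_subsum_empty_iff [simp]: "signed_subsum {#} s \<longleftrightarrow> s = 0"
  by (auto simp: signed_subsum_def)

lemma signed_subsum_add_mset_iff:
  "signed_subsum (add_mset x X) s \<longleftrightarrow>
     signed_subsum X s \<or> signed_subsum X (s - x) \<or> signed_subsum X (s + x)"
proof
  assume "signed_subsum (add_mset x X) s"
  then obtain A B where AB: "A + B \<subseteq># add_mset x X" and s: "s = \<Sum>\<^sub># A - \<Sum>\<^sub># B"
    unfolding signed_subsum_def by blast
  consider "x \<in># A" | "x \<in># B" | "x \<notin># A + B" by auto
  then show "signed_subsum X s \<or> signed_subsum X (s - x) \<or> signed_subsum X (s + x)"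
  proof cases
    case 1
    then obtain A' where "A = add_mset x A'" by (metis multi_member_split)
    with AB s have "A' + B \<subseteq># X" "s - x = \<Sum>\<^sub># A' - \<Sum>\<^sub># B" by auto
    then show ?thesis unfolding signed_subsum_def by blast
  next
    case 2
    then obtain B' where "B = add_mset x B'" by (metis multi_member_split)
    with AB s have "A + B' \<subseteq># X" "s + x = \<Sum>\<^sub># A - \<Sum>\<^sub># B'" by auto
    then show ?thesis unfolding signed_subsum_def by blast
  next
    case 3
    with AB have "A + B \<subseteq># X"
      unfolding subseteq_mset_def by (metis count_add_mset count_eq_zero_iff count_union zero_le)
    with s show ?thesis unfolding signed_subsum_def by blast
  qed
next
  have mono: "A + B \<subseteq># X \<Longrightarrow> A + B \<subseteq># add_mset x X" for A B
    by (metis add_mset_add_single subset_mset.add_increasing2 subset_mset.add_mono mset_subset_eq_add_left subset_mset.order_trans)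
  assume "signed_subsum X s \<or> signed_subsum X (s - x) \<or> signed_subsum X (s + x)"
  then obtain A B where AB: "A + B \<subseteq># X"
    and s: "s = \<Sum>\<^sub># A - \<Sum>\<^sub># B \<or> s - x = \<Sum>\<^sub># A - \<Sum>\<^sub># B \<or> s + x = \<Sum>\<^sub># A - \<Sum>\<^sub># B"
    unfolding signed_subsum_def by blast
  have "add_mset x A + B \<subseteq># add_mset x X" "A + add_mset x B \<subseteq># add_mset x X"
    using AB by simp_all
  with mono[OF AB] s show "signed_subsum (add_mset x X) s"
    unfolding signed_subsum_def by (smt (verit) sum_mset.add_mset)
qed

lemma signed_subsum_zero: "signed_subsum X 0"
  unfolding signed_subsum_def by (rule exI[of _ "{#}"], rule exI[of _ "{#}"]) simp

lemma signed_subsum_member: "x \<in># X \<Longrightarrow> signed_subsum X x"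
  by (metis multi_member_split signed_subsum_add_mset_iff signed_subsum_zero diff_self)

lemma signed_subsum_mono: "signed_subsum X s \<Longrightarrow> X \<subseteq># Y \<Longrightarrow> signed_subsum Y s"
  unfolding signed_subsum_def using subset_mset.order_trans by blast

lemma signed_subsum_diff:
  assumes "A \<subseteq># X" "B \<subseteq># X"
  shows "signed_subsum X (\<Sum>\<^sub># A - \<Sum>\<^sub># B)"
proof -
  have "count (A - B + (B - A)) a \<le> count X a" for a
    using mset_subset_eq_count[OF assms(1), of a] mset_subset_eq_count[OF assms(2), of a] by simp
  then have "(A - B) + (B - A) \<subseteq># X"
    by (simp add: subseteq_mset_def)
  moreover have "\<Sum>\<^sub># A - \<Sum>\<^sub># B = \<Sum>\<^sub># (A - B) - \<Sum>\<^sub># (B - A)"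
  proof -
    have "A = (A - B) + (A \<inter># B)" "B = (B - A) + (A \<inter># B)"
      by (simp_all add: multiset_eq_iff min_def)
    then show ?thesis by (metis add_diff_cancel_right sum_mset.union)
  qed
  ultimately show ?thesis unfolding signed_subsum_def by blast
qed

lemma signed_subsum_image_mset_iff:
  "signed_subsum (image_mset f M) s \<longleftrightarrow>
     (\<exists>A B. A + B \<subseteq># M \<and> s = (\<Sum>x\<in>#A. f x) - (\<Sum>x\<in>#B. f x))"
proof
  assume "signed_subsum (image_mset f M) s"
  then obtain A B where AB: "A + B \<subseteq># image_mset f M" and s: "s = \<Sum>\<^sub># A - \<Sum>\<^sub># B"
    unfolding signed_subsum_def by blast
  obtain D E where "M = D + E" "A + B = image_mset f D"
    using AB by (metis image_mset_eq_plusD subset_mset.add_diff_inverse)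
  moreover obtain A' B' where "D = A' + B'" "A = image_mset f A'" "B = image_mset f B'"
    using calculation(2) by (metis image_mset_eq_plusD)
  ultimately show "\<exists>A B. A + B \<subseteq># M \<and> s = (\<Sum>x\<in>#A. f x) - (\<Sum>x\<in>#B. f x)"
    using s by (intro exI[of _ A'] exI[of _ B']) auto
next
  assume "\<exists>A B. A + B \<subseteq># M \<and> s = (\<Sum>x\<in>#A. f x) - (\<Sum>x\<in>#B. f x)"
  then show "signed_subsum (image_mset f M) s"
    unfolding signed_subsum_def by (metis image_mset_subseteq_mono image_mset_union)
qed

lemma signed_subsum_merge:
  assumes "signed_subsum (add_mset (x + c * y) X) s" and "c = 1 \<or> c = -1"
  shows "signed_subsum (add_mset x (add_mset y X)) s"
  using assms unfolding signed_subsum_add_mset_iff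
  by (elim disjE) (auto simp: algebra_simps)

definition dyadic_weight :: "int multiset \<Rightarrow> nat" where
  "dyadic_weight X = (\<Sum>x\<in>#X. 2 ^ multiplicity 2 x)"

lemma dyadic_weight_empty [simp]: "dyadic_weight {#} = 0"
  and dyadic_weight_add_mset [simp]: "dyadic_weight (add_mset x X) = 2 ^ multiplicity 2 x + dyadic_weight X"
  by (simp_all add: dyadic_weight_def)

lemma size_le_dyadic_weight: "size X \<le> dyadic_weight X"
proof (induction X)
  case (add x X)
  have "1 \<le> (2::nat) ^ multiplicity 2 x" by simp
  with add show ?case by (simp only: size_add_mset dyadic_weight_add_mset)
qed simp

lemma sum_mset_power2_less:
  fixes J :: "nat multiset"
  assumes "\<forall>j. count J j \<le> 1" and "\<forall>j\<in>#J. j < k"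
  shows "(\<Sum>j\<in>#J. 2 ^ j) < (2::nat) ^ k"
proof -
  have "count J j = count (mset_set (set_mset J)) j" for j
    using assms(1)[rule_format, of j] by (cases "j \<in># J") (auto simp: not_in_iff le_Suc_eq dest: count_eq_zero_iff[THEN iffD1])
  then have "J = mset_set (set_mset J)"
    by (rule multiset_eqI)
  then have "(\<Sum>j\<in>#J. 2 ^ j) = (\<Sum>j\<in>set_mset J. (2::nat) ^ j)"
    by (metis sum_unfold_sum_mset)
  also have "\<dots> \<le> (\<Sum>j\<in>{q. q < k}. 2 ^ j)"
    using assms(2) by (intro sum_mono2) auto
  also have "\<dots> = 2 ^ k - 1"
    by (rule mask_eq_sum_exp[symmetric])
  finally show ?thesis
    using one_le_power[of "2::nat" k] by linarith
qed

lemma multiplicity_two_add_or_diff: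
  fixes x y :: int
  assumes "x \<noteq> 0" "y \<noteq> 0" and "multiplicity 2 x = j" "multiplicity 2 y = j"
  obtains c where "c = 1 \<or> c = -1" "multiplicity 2 (x + c * y) = Suc j"
proof -
  obtain u where x: "x = 2 ^ j * u" "odd u"
    using multiplicity_decompose'[of x 2] assms(1) unfolding assms(3) by auto
  obtain w where y: "y = 2 ^ j * w" "odd w"
    using multiplicity_decompose'[of y 2] assms(2) unfolding assms(4) by auto
  obtain b d where "u = 2 * b + 1" "w = 2 * d + 1"
    using x(2) y(2) by (auto elim!: oddE)
  then have sum: "x + 1 * y = 2 ^ Suc j * (b + d + 1)" and diff: "x + (-1) * y = 2 ^ Suc j * (b - d)"
    using x(1) y(1) by (simp_all add: algebra_simps)
  have "odd ((b + d + 1) + (b - d))"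
    by simp
  then have "odd (b + d + 1) \<or> odd (b - d)"
    by (auto simp only: even_add)
  then show ?thesis
    using that[of 1] that[of "-1"] sum diff by (auto simp: multiplicity_decomposeI)
qed

lemma cong_power_two_multiplicity:
  fixes x :: int
  assumes "x \<noteq> 0"
  shows "[x = 2 ^ multiplicity 2 x] (mod 2 ^ Suc (multiplicity 2 x))"
proof -
  obtain u where x: "x = 2 ^ multiplicity 2 x * u" "odd u"
    using multiplicity_decompose'[of x 2] assms by auto
  then obtain b where "u = 2 * b + 1"
    by (auto elim!: oddE)
  with x(1) have "x - 2 ^ multiplicity 2 x = 2 ^ Suc (multiplicity 2 x) * b"
    by (simp add: algebra_simps)
  then show ?thesis
    by (simp add: cong_iff_dvd_diff)
qed

lemma signed_subsum_cong_half_power: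
  fixes X :: "int multiset"
  assumes "m \<ge> 1" and "\<forall>x\<in>#X. \<not> 2 ^ m dvd x" and "2 ^ (m - 1) \<le> dyadic_weight X"
  shows "\<exists>s. signed_subsum X s \<and> [s = 2 ^ (m - 1)] (mod 2 ^ m)"
  using assms(2,3)
proof (induction "size X" arbitrary: X rule: less_induct)
  case less
  have nonzero: "x \<noteq> 0" and small: "multiplicity 2 x < m" if "x \<in># X" for x
    using less.prems(1) that by (auto intro: multiplicity_lessI)
  consider (top) x where "x \<in># X" "multiplicity 2 x = m - 1"
    | (pair) x y Y where "X = add_mset x (add_mset y Y)" "multiplicity 2 x = multiplicity 2 y"
        "multiplicity 2 x < m - 1"
    | (distinct) "\<forall>j. count (image_mset (multiplicity 2) X) j \<le> 1" "\<forall>x\<in>#X. multiplicity 2 x < m - 1"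
  proof (cases "\<exists>x\<in>#X. multiplicity 2 x = m - 1")
    case False
    with small have low: "\<forall>x\<in>#X. multiplicity 2 x < m - 1"
      by fastforce
    show ?thesis
    proof (cases "\<exists>j. count (image_mset (multiplicity 2) X) j \<ge> 2")
      case True
      then obtain j where j: "count (image_mset (multiplicity 2) X) j \<ge> 2" by blast
      then have "j \<in># image_mset (multiplicity 2) X"
        by (subst count_greater_zero_iff[symmetric]) linarith
      then obtain x X' where X: "X = add_mset x X'" and x: "multiplicity 2 x = j"
        by (auto dest: multi_member_split)
      with j have "j \<in># image_mset (multiplicity 2) X'"
        by (subst count_greater_zero_iff[symmetric]) simp
      then obtain y Y where "X' = add_mset y Y" "multiplicity 2 y = j"
        by (auto dest: multi_member_split)
      with X x low show ?thesis
        using that(2) by auto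
    qed (use low that(3) not_less_eq_eq in auto)
  qed (use that(1) in blast)
  then show ?case
  proof cases
    case top
    then have "[x = 2 ^ (m - 1)] (mod 2 ^ m)"
      using cong_power_two_multiplicity[OF nonzero[OF top(1)]] assms(1) by simp
    then show ?thesis
      using signed_subsum_member[OF top(1)] by blast
  next
    case pair
    have "x \<noteq> 0" "y \<noteq> 0"
      using nonzero pair(1) by auto
    then obtain c where c: "c = 1 \<or> c = -1" and z: "multiplicity 2 (x + c * y) = Suc (multiplicity 2 x)"
      using multiplicity_two_add_or_diff[OF _ _ refl pair(2)[symmetric]] by blast
    let ?Z = "add_mset (x + c * y) Y"
    have "\<not> 2 ^ m dvd x + c * y"
      using z pair(3) power_dvd_iff_le_multiplicity[of "x + c * y" 2 m]
      by (cases "x + c * y = 0") auto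
    moreover have "dyadic_weight ?Z = dyadic_weight X"
      using z pair(1,2) by simp
    ultimately obtain s where "signed_subsum ?Z s" "[s = 2 ^ (m - 1)] (mod 2 ^ m)"
      using less.hyps[of ?Z] less.prems pair(1) by auto
    then show ?thesis
      using signed_subsum_merge c pair(1) by blast
  next
    case distinct
    have "dyadic_weight X = (\<Sum>j\<in>#image_mset (multiplicity 2) X. 2 ^ j)"
      by (simp add: dyadic_weight_def image_mset.compositionality comp_def)
    also have "\<dots> < 2 ^ (m - 1)"
      using distinct by (intro sum_mset_power2_less) auto
    finally show ?thesis
      using less.prems(2) by simp
  qed
qed

lemma signed_subsum_cong_multiple:
  assumes "signed_subsum X s" and "\<forall>x\<in>#X. [x = e] (mod M) \<or> [x = - e] (mod M)"
  shows "\<exists>c. \<bar>c\<bar> \<le> int (size X) \<and> [s = e * c] (mod M)"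
  using assms
proof (induction X arbitrary: s)
  case empty
  then show ?case by simp
next
  case (add x X)
  have "[x = e * 1] (mod M) \<or> [x = e * (-1)] (mod M)"
    using add.prems(2) by simp
  then obtain \<epsilon> :: int where \<epsilon>: "\<bar>\<epsilon>\<bar> = 1" "[x = e * \<epsilon>] (mod M)"
    by (metis abs_1 abs_minus)
  have "signed_subsum X (s - 0 * x) \<or> signed_subsum X (s - 1 * x) \<or> signed_subsum X (s - (-1) * x)"
    using add.prems(1) by (simp add: signed_subsum_add_mset_iff)
  then obtain t d :: int where t: "signed_subsum X t" and d: "\<bar>d\<bar> \<le> 1" "s = t + d * x"
    by (metis abs_0 abs_1 abs_minus diff_add_cancel order.refl zero_le_one)
  obtain c where c: "\<bar>c\<bar> \<le> int (size X)" "[t = e * c] (mod M)"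
    using add.IH[OF t] add.prems(2) by auto
  have "[t + d * x = e * c + d * (e * \<epsilon>)] (mod M)"
    using c(2) \<epsilon>(2) by (intro cong_add cong_mult) auto
  then have "[s = e * (c + d * \<epsilon>)] (mod M)"
    using d(2) by (simp add: algebra_simps)
  moreover have "\<bar>c + d * \<epsilon>\<bar> \<le> int (size (add_mset x X))"
    using c(1) d(1) \<epsilon>(1) abs_triangle_ineq[of c "d * \<epsilon>"] by (simp add: abs_mult)
  ultimately show ?case by blast
qed

lemma not_signed_subsum_cong_half_power:
  assumes "m \<ge> 1" and "odd e" and "\<forall>x\<in>#X. [x = e] (mod 2 ^ m) \<or> [x = - e] (mod 2 ^ m)"
    and "size X < 2 ^ (m - 1)" and "signed_subsum X s"
  shows "\<not> [s = 2 ^ (m - 1)] (mod 2 ^ m)"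
proof
  assume s: "[s = 2 ^ (m - 1)] (mod 2 ^ m)"
  obtain c where c: "\<bar>c\<bar> \<le> int (size X)" "[s = e * c] (mod 2 ^ m)"
    using signed_subsum_cong_multiple[OF assms(5,3)] by blast
  have m: "(2::int) ^ m = 2 ^ (m - 1) * 2"
    using assms(1) by (simp flip: power_Suc2)
  from s c(2) have ec: "[e * c = 2 ^ (m - 1)] (mod 2 ^ m)"
    by (metis cong_sym cong_trans)
  then have "[e * c = 2 ^ (m - 1)] (mod 2 ^ (m - 1))"
    using m by (metis cong_dvd_modulus dvd_triv_left)
  then have "2 ^ (m - 1) dvd e * c"
    using cong_dvd_iff[of "e * c" "2 ^ (m - 1)" "2 ^ (m - 1)"] by simp
  moreover have "coprime ((2::int) ^ (m - 1)) e"
    using assms(2) by simp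
  ultimately have "2 ^ (m - 1) dvd c"
    by (simp add: coprime_dvd_mult_right_iff)
  moreover have "\<bar>c\<bar> < 2 ^ (m - 1)"
  proof -
    have "int (size X) < 2 ^ (m - 1)"
      using assms(4) by (metis of_nat_less_iff of_nat_numeral of_nat_power)
    with c(1) show ?thesis by linarith
  qed
  ultimately have "c = 0"
    using dvd_imp_le_int[of c "2 ^ (m - 1)"] by fastforce
  with ec have "(2::int) ^ m dvd 2 ^ (m - 1)"
    by (simp add: cong_0_iff cong_sym_eq[of 0])
  then show False
    using m by simp
qed

lemma signed_subsum_cong_half_power_iff:
  fixes X :: "int multiset"
  assumes m: "m \<ge> 2" and X: "\<forall>x\<in>#X. \<not> 2 ^ m dvd x" and size: "size X = 2 ^ (m - 1) - 1"
  shows "(\<exists>s. signed_subsum X s \<and> [s = 2 ^ (m - 1)] (mod 2 ^ m)) \<longleftrightarrow>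
         \<not> (\<exists>e. odd e \<and> (\<forall>x\<in>#X. [x = e] (mod 2 ^ m) \<or> [x = - e] (mod 2 ^ m)))"
proof
  show "\<not> (\<exists>e. odd e \<and> (\<forall>x\<in>#X. [x = e] (mod 2 ^ m) \<or> [x = - e] (mod 2 ^ m)))"
    if "\<exists>s. signed_subsum X s \<and> [s = 2 ^ (m - 1)] (mod 2 ^ m)"
    using that not_signed_subsum_cong_half_power[of m _ X] m size by fastforce
next
  assume no_e: "\<not> (\<exists>e. odd e \<and> (\<forall>x\<in>#X. [x = e] (mod 2 ^ m) \<or> [x = - e] (mod 2 ^ m)))"
  have "(2::nat) ^ 1 \<le> 2 ^ (m - 1)"
    using m by (intro power_increasing) auto
  then have two: "2 \<le> (2::nat) ^ (m - 1)" by simp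
  have nonzero: "x \<noteq> 0" if "x \<in># X" for x
    using X that by auto
  show "\<exists>s. signed_subsum X s \<and> [s = 2 ^ (m - 1)] (mod 2 ^ m)"
  proof (cases "\<exists>x\<in>#X. even x")
    case True
    then obtain x Y where XY: "X = add_mset x Y" and "even x"
      by (auto dest: multi_member_split)
    then have "1 \<le> multiplicity 2 x"
      using nonzero by (intro multiplicity_geI) auto
    then have "2 ^ 1 \<le> (2::nat) ^ multiplicity 2 x"
      by (intro power_increasing) auto
    then have "2 ^ (m - 1) \<le> dyadic_weight X"
      using XY size size_le_dyadic_weight[of Y] two by simp
    then show ?thesis
      using signed_subsum_cong_half_power[OF _ X] m by simp
  next
    case False
    then have odd: "odd x" if "x \<in># X" for x
      using that by blast
    from size two have "X \<noteq> {#}"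
      by auto
    then obtain x where x: "x \<in># X"
      by blast
    with no_e odd obtain y where y: "y \<in># X" "\<not> [y = x] (mod 2 ^ m)" "\<not> [y = - x] (mod 2 ^ m)"
      by blast
    from x obtain X' where X': "X = add_mset x X'"
      by (auto dest: multi_member_split)
    have "y \<noteq> x"
      using y(2) by auto
    with y(1) X' obtain Y where XY: "X = add_mset x (add_mset y Y)"
      by (auto dest: multi_member_split)
    obtain b d where "x = 2 * b + 1" "y = 2 * d + 1"
      using odd x y(1) by (meson oddE)
    then have sum: "x + 1 * y = 2 * (b + d + 1)" and diff: "x + (-1) * y = 2 * (b - d)"
      by simp_all
    have "odd ((b + d + 1) + (b - d))"
      by simp
    then have "even (b + d + 1) \<or> even (b - d)"
      by (auto simp only: even_add)
    moreover have "4 dvd 2 * k" if "even k" for k :: int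
      using that by (auto elim!: evenE)
    ultimately have "4 dvd x + 1 * y \<or> 4 dvd x + (-1) * y"
      unfolding sum diff by blast
    then obtain c where c: "c = 1 \<or> c = -1" "4 dvd x + c * y"
      by blast
    have "\<not> 2 ^ m dvd x + c * y"
      using c(1) y(2,3) by (auto simp: cong_iff_dvd_diff algebra_simps)
    moreover have "2 \<le> multiplicity 2 (x + c * y)"
      using c(2) calculation by (intro multiplicity_geI) auto
    then have "2 ^ 2 \<le> (2::nat) ^ multiplicity 2 (x + c * y)"
      by (intro power_increasing) auto
    then have "2 ^ (m - 1) \<le> dyadic_weight (add_mset (x + c * y) Y)"
      using XY size size_le_dyadic_weight[of Y] two by simp
    ultimately obtain s where "signed_subsum (add_mset (x + c * y) Y) s" "[s = 2 ^ (m - 1)] (mod 2 ^ m)"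
      using signed_subsum_cong_half_power[of m "add_mset (x + c * y) Y"] X XY m by auto
    then show ?thesis
      using signed_subsum_merge[OF _ c(1)] XY by blast
  qed
qed

lemma dvd_sum_mset:
  fixes d :: "'a :: comm_semiring_1"
  shows "(\<And>x. x \<in># M \<Longrightarrow> d dvd f x) \<Longrightarrow> d dvd (\<Sum>x\<in>#M. f x)"
  by (induction M) auto

lemma power2_dvd_int_iff: "(2::int) ^ k dvd int n \<longleftrightarrow> 2 ^ k dvd n"
  by (metis int_dvd_int_iff of_nat_numeral of_nat_power)

lemma prod_mset_coprime:
  fixes a :: "'a :: semiring_gcd"
  shows "(\<And>x. x \<in># M \<Longrightarrow> coprime x a) \<Longrightarrow> coprime (\<Prod>\<^sub># M) a"
  by (induction M) auto

lemma coprime_if_in_prime_factorization: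
  "coprime n a \<Longrightarrow> r \<in># prime_factorization n \<Longrightarrow> coprime r a"
  using coprime_divisors[OF in_prime_factors_imp_dvd dvd_refl] by blast

locale primitive_root =
  fixes q g :: nat
  assumes modulus_gt_2: "q > 2" and primroot: "residue_primroot q g"
begin

abbreviation \<nu> :: nat where "\<nu> \<equiv> multiplicity 2 (totient q)"

lemma coprime_g: "coprime g q" and ord_g: "ord q g = totient q"
  using primroot by (auto simp: residue_primroot_def coprime_commute)

lemma totient_even: "even (totient q)"
  using modulus_gt_2 by (intro totient_even) auto

lemma pow_cong_iff: "[g ^ i = g ^ j] (mod q) \<longleftrightarrow> [i = j] (mod totient q)"
  using order_divides_expdiff[of q g] coprime_g ord_g by (simp add: coprime_commute)

definition dlog :: "nat \<Rightarrow> nat" where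
  "dlog x = (SOME i. i < totient q \<and> [g ^ i = x] (mod q))"

lemma dlog_less_totient: "coprime x q \<Longrightarrow> dlog x < totient q"
  and pow_dlog_cong: "coprime x q \<Longrightarrow> [g ^ dlog x = x] (mod q)"
proof -
  assume "coprime x q"
  then have "x mod q \<in> totatives q"
    using modulus_gt_2 by (auto simp: totatives_def intro!: Nat.gr0I)
  moreover have "bij_betw (\<lambda>i. g ^ i mod q) {..<totient q} (totatives q)"
    using modulus_gt_2 primroot by (intro residue_primroot_is_generator) auto
  ultimately have "x mod q \<in> (\<lambda>i. g ^ i mod q) ` {..<totient q}"
    unfolding bij_betw_def by simp
  then have "\<exists>i. i < totient q \<and> [g ^ i = x] (mod q)"
    unfolding cong_def by auto
  then have "dlog x < totient q \<and> [g ^ dlog x = x] (mod q)"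
    unfolding dlog_def by (rule someI_ex)
  then show "dlog x < totient q" "[g ^ dlog x = x] (mod q)"
    by auto
qed

lemma pow_cong_iff_dlog: "coprime x q \<Longrightarrow> [g ^ i = x] (mod q) \<longleftrightarrow> [i = dlog x] (mod totient q)"
  using pow_dlog_cong pow_cong_iff by (metis cong_sym cong_trans)

lemma dlog_mult:
  assumes "coprime x q" "coprime y q"
  shows "[dlog (x * y) = dlog x + dlog y] (mod totient q)"
proof -
  have "[g ^ (dlog x + dlog y) = x * y] (mod q)"
    unfolding power_add using assms by (intro cong_mult pow_dlog_cong)
  then have "[dlog x + dlog y = dlog (x * y)] (mod totient q)"
    using assms by (simp add: pow_cong_iff_dlog)
  then show ?thesis
    by (rule cong_sym)
qed

lemma dlog_prod_mset:
  "\<forall>x\<in>#M. coprime x q \<Longrightarrow> [dlog (\<Prod>\<^sub># M) = (\<Sum>x\<in>#M. dlog x)] (mod totient q)"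
proof (induction M)
  case empty
  have "[g ^ 0 = 1] (mod q)" by simp
  then have "[0 = dlog 1] (mod totient q)"
    using pow_cong_iff_dlog[of 1 0] by simp
  then show ?case
    by (simp add: cong_sym)
next
  case (add x M)
  have "coprime (\<Prod>\<^sub># M) q"
    using add.prems by (simp add: prod_mset_coprime)
  then have "[dlog (x * \<Prod>\<^sub># M) = dlog x + dlog (\<Prod>\<^sub># M)] (mod totient q)"
    using add.prems by (intro dlog_mult) auto
  also have "[dlog x + dlog (\<Prod>\<^sub># M) = dlog x + (\<Sum>x\<in>#M. dlog x)] (mod totient q)"
    using add by (intro cong_add) auto
  finally show ?case
    by simp
qed

lemma dlog_minus_one: "dlog (q - 1) = totient q div 2"
proof -
  define d where "d = dlog (q - 1)"
  have cop: "coprime (q - 1) q"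
    using modulus_gt_2 by (intro coprime_diff_one_left_nat) simp
  have "[int (q - 1) ^ 2 = (- 1) ^ 2] (mod int q)"
    using modulus_gt_2 by (intro cong_pow) (simp add: cong_iff_dvd_diff)
  then have "[int ((q - 1) ^ 2) = int 1] (mod int q)"
    by simp
  then have "[(q - 1) ^ 2 = 1] (mod q)"
    by (simp only: cong_int_iff)
  moreover have "[(g ^ d) ^ 2 = (q - 1) ^ 2] (mod q)"
    unfolding d_def using pow_dlog_cong[OF cop] by (rule cong_pow)
  then have "[g ^ (2 * d) = (q - 1) ^ 2] (mod q)"
    by (simp add: power_mult mult.commute[of 2])
  ultimately have "totient q dvd 2 * d"
    using ord_divides[of g "2 * d" q] ord_g by (metis cong_trans)
  moreover have "d \<noteq> 0"
  proof
    assume "d = 0"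
    then have "[q - 1 = 1] (mod q)"
      using pow_dlog_cong[OF cop] unfolding d_def by (simp add: cong_sym_eq)
    then show False
      using modulus_gt_2 by (simp add: cong_def)
  qed
  moreover have "d < totient q"
    unfolding d_def using cop by (rule dlog_less_totient)
  ultimately have "2 * d = totient q"
  proof -
    obtain k where k: "2 * d = totient q * k"
      using \<open>totient q dvd 2 * d\<close> ..
    have "0 < k"
      using k \<open>d \<noteq> 0\<close> by (cases k) auto
    have "totient q * k < totient q * 2"
      using k \<open>d < totient q\<close> by linarith
    then have "k < 2"
      using mult_less_cancel1 by blast
    with \<open>0 < k\<close> have "k = 1"
      by simp
    with k show ?thesis
      by simp
  qed
  then show ?thesis
    unfolding d_def by simp
qed

lemma dlog_cong: "[x = y] (mod q) \<Longrightarrow> dlog x = dlog y"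
  unfolding dlog_def cong_def by simp

lemma dlog_uminus:
  assumes "coprime x q" "coprime y q" and "[x + y = 0] (mod q)"
  shows "[dlog x = totient q div 2 + dlog y] (mod totient q)"
proof -
  have "(q - 1) * y + y = q * y"
    using modulus_gt_2 by (cases q) auto
  moreover have "[q * y = 0] (mod q)"
    by (simp add: cong_0_iff)
  ultimately have "[x + y = (q - 1) * y + y] (mod q)"
    using assms(3) by (metis cong_sym cong_trans)
  then have "[x = (q - 1) * y] (mod q)"
    by (simp only: cong_add_rcancel_nat)
  then have "dlog x = dlog ((q - 1) * y)"
    by (rule dlog_cong)
  moreover have "coprime (q - 1) q"
    using modulus_gt_2 by (intro coprime_diff_one_left_nat) simp
  ultimately show ?thesis
    using dlog_mult[of "q - 1" y] assms(2) dlog_minus_one by simp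
qed

lemma odd_ord_pow_iff: "odd (ord q (g ^ i)) \<longleftrightarrow> 2 ^ \<nu> dvd i"
proof -
  obtain w where w: "totient q = 2 ^ \<nu> * w" "odd w"
    using multiplicity_decompose'[of "totient q" 2] modulus_gt_2 by auto
  have "ord q (g ^ i) dvd totient q"
    using coprime_g by (intro ord_divides[THEN iffD1] euler_theorem) (simp add: coprime_commute)
  then have "odd (ord q (g ^ i)) \<longleftrightarrow> ord q (g ^ i) dvd w"
  proof (intro iffI)
    assume "odd (ord q (g ^ i))"
    then have "coprime (ord q (g ^ i)) (2 ^ \<nu>)"
      by simp
    moreover have "ord q (g ^ i) dvd 2 ^ \<nu> * w"
      using \<open>ord q (g ^ i) dvd totient q\<close> by (subst (asm) w(1))
    ultimately show "ord q (g ^ i) dvd w"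
      by (simp add: coprime_dvd_mult_right_iff)
  next
    assume "ord q (g ^ i) dvd w"
    with w(2) show "odd (ord q (g ^ i))"
      using dvd_trans[of 2 "ord q (g ^ i)" w] by blast
  qed
  also have "\<dots> \<longleftrightarrow> [(g ^ i) ^ w = 1] (mod q)"
    by (rule ord_divides[symmetric])
  also have "\<dots> \<longleftrightarrow> totient q dvd i * w"
    using ord_divides[of g "i * w" q] ord_g by (simp add: power_mult)
  also have "\<dots> \<longleftrightarrow> 2 ^ \<nu> * w dvd i * w"
    by (subst w(1)) (rule refl)
  also have "\<dots> \<longleftrightarrow> 2 ^ \<nu> dvd i"
    using w(2) by (auto elim: oddE)
  finally show ?thesis .
qed

lemma odd_ord_iff_dlog:
  assumes "coprime x q"
  shows "odd (ord q x) \<longleftrightarrow> 2 ^ \<nu> dvd dlog x"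
proof -
  have "ord q x = ord q (g ^ dlog x)"
    using pow_dlog_cong[OF assms] by (intro ord_cong) (rule cong_sym)
  then show ?thesis
    by (simp add: odd_ord_pow_iff)
qed

lemma card_odd_ord:
  "card {x \<in> totatives q. odd (ord q x)} = totient q div 2 ^ \<nu>"
proof -
  let ?f = "\<lambda>i. g ^ i mod q"
  have bij: "bij_betw ?f {..<totient q} (totatives q)"
    using modulus_gt_2 primroot by (intro residue_primroot_is_generator) auto
  have ord_mod: "ord q (x mod q) = ord q x" for x
    by (rule ord_cong) (simp add: cong_def)
  have "{x \<in> totatives q. odd (ord q x)} = ?f ` {i \<in> {..<totient q}. 2 ^ \<nu> dvd i}"
  proof (intro equalityI subsetI)
    fix x assume x: "x \<in> {x \<in> totatives q. odd (ord q x)}"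
    then obtain i where "i < totient q" "x = ?f i"
      using bij unfolding bij_betw_def by (metis (no_types, lifting) imageE lessThan_iff mem_Collect_eq)
    with x show "x \<in> ?f ` {i \<in> {..<totient q}. 2 ^ \<nu> dvd i}"
      using odd_ord_pow_iff[of i] by (auto simp: ord_mod)
  next
    fix x assume "x \<in> ?f ` {i \<in> {..<totient q}. 2 ^ \<nu> dvd i}"
    then obtain i where "i < totient q" "2 ^ \<nu> dvd i" "x = ?f i"
      by blast
    then show "x \<in> {x \<in> totatives q. odd (ord q x)}"
      using bij odd_ord_pow_iff[of i] unfolding bij_betw_def by (auto simp: ord_mod)
  qed
  also have "card \<dots> = card {i \<in> {..<totient q}. 2 ^ \<nu> dvd i}"
    using bij unfolding bij_betw_def by (intro card_image) (auto intro: inj_on_subset)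
  also have "\<dots> = totient q div 2 ^ \<nu>"
  proof -
    have multiples: "card {i \<in> {..<d * w}. d dvd i} = w" if "d > 0" for d w :: nat
    proof -
      have "{i \<in> {..<d * w}. d dvd i} = (\<lambda>j. d * j) ` {..<w}"
        using that by (auto elim!: dvdE)
      then show ?thesis
        using that by (simp add: card_image inj_on_def)
    qed
    obtain w where "totient q = 2 ^ \<nu> * w"
      using multiplicity_dvd[of 2 "totient q"] by (rule dvdE)
    then show ?thesis
      by (metis multiples nonzero_mult_div_cancel_left pos2 zero_less_power power_not_zero zero_neq_numeral)
  qed
  finally show ?thesis .
qed

lemma cong_gpow_iff:
  assumes "coprime r q"
  shows "cong_gpow q g e r \<longleftrightarrow> [int (dlog r) = e] (mod int (totient q))"
proof (cases "e \<ge> 0")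
  case True
  then have "cong_gpow q g e r \<longleftrightarrow> [nat e = dlog r] (mod totient q)"
    using pow_cong_iff_dlog[OF assms] by (simp add: cong_gpow_def cong_sym_eq)
  also have "\<dots> \<longleftrightarrow> [int (dlog r) = e] (mod int (totient q))"
    using True by (simp add: cong_sym_eq flip: cong_int_iff)
  finally show ?thesis .
next
  case False
  have "[r * g ^ nat (- e) = g ^ dlog r * g ^ nat (- e)] (mod q)"
    using pow_dlog_cong[OF assms] by (intro cong_mult) (auto simp: cong_sym)
  then have "cong_gpow q g e r \<longleftrightarrow> [g ^ (dlog r + nat (- e)) = g ^ 0] (mod q)"
    using False by (simp add: cong_gpow_def power_add) (metis cong_sym cong_trans)
  also have "\<dots> \<longleftrightarrow> [dlog r + nat (- e) = 0] (mod totient q)"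
    by (rule pow_cong_iff)
  also have "\<dots> \<longleftrightarrow> [int (dlog r + nat (- e)) = int 0] (mod int (totient q))"
    by (rule cong_int_iff[symmetric])
  also have "\<dots> \<longleftrightarrow> [int (dlog r) = e] (mod int (totient q))"
    using False by (simp add: cong_iff_dvd_diff)
  finally show ?thesis .
qed

lemma totient_half_cong:
  "[int (totient q div 2) = 2 ^ (\<nu> - 1)] (mod 2 ^ \<nu>)"
proof -
  obtain w where w: "totient q = 2 ^ \<nu> * w" "odd w"
    using multiplicity_decompose'[of "totient q" 2] modulus_gt_2 by auto
  have "\<nu> \<noteq> 0"
    using totient_even modulus_gt_2 by (simp add: multiplicity_eq_zero_iff)
  then obtain u where "\<nu> = Suc u"
    using not0_implies_Suc by blast
  moreover obtain b where "w = 2 * b + 1"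
    using w(2) by (auto elim!: oddE)
  ultimately have "int (totient q div 2) - 2 ^ (\<nu> - 1) = 2 ^ \<nu> * int b"
    by (subst w(1)) (simp add: algebra_simps)
  then show ?thesis
    by (simp add: cong_iff_dvd_diff)
qed

lemma nu_pos: "\<nu> \<ge> 1"
  using totient_even modulus_gt_2 by (simp add: Suc_le_eq multiplicity_gt_zero_iff)

lemma two_power_dvd_int_totient: "2 ^ \<nu> dvd int (totient q)"
  using multiplicity_dvd[of 2 "totient q"] power2_dvd_int_iff by blast

lemma cong_two_power_if_cong_totient:
  assumes "[i = j] (mod totient q)"
  shows "[int i = int j] (mod 2 ^ \<nu>)"
  using assms two_power_dvd_int_totient by (auto simp flip: cong_int_iff intro: cong_dvd_modulus)

lemma cong_gpow_pm_iff:
  assumes "coprime r q"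
  shows "(\<exists>e'. cong_gpow q g e' r \<and> ([e' = e] (mod 2 ^ \<nu>) \<or> [e' = - e] (mod 2 ^ \<nu>))) \<longleftrightarrow>
         [int (dlog r) = e] (mod 2 ^ \<nu>) \<or> [int (dlog r) = - e] (mod 2 ^ \<nu>)"
proof
  assume "\<exists>e'. cong_gpow q g e' r \<and> ([e' = e] (mod 2 ^ \<nu>) \<or> [e' = - e] (mod 2 ^ \<nu>))"
  then obtain e' where "cong_gpow q g e' r" and e': "[e' = e] (mod 2 ^ \<nu>) \<or> [e' = - e] (mod 2 ^ \<nu>)"
    by blast
  then have "[int (dlog r) = e'] (mod 2 ^ \<nu>)"
    using assms cong_gpow_iff two_power_dvd_int_totient by (blast intro: cong_dvd_modulus)
  with e' show "[int (dlog r) = e] (mod 2 ^ \<nu>) \<or> [int (dlog r) = - e] (mod 2 ^ \<nu>)"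
    using cong_trans by blast
next
  assume "[int (dlog r) = e] (mod 2 ^ \<nu>) \<or> [int (dlog r) = - e] (mod 2 ^ \<nu>)"
  moreover have "cong_gpow q g (int (dlog r)) r"
    using cong_gpow_iff[OF assms] by simp
  ultimately show "\<exists>e'. cong_gpow q g e' r \<and> ([e' = e] (mod 2 ^ \<nu>) \<or> [e' = - e] (mod 2 ^ \<nu>))"
    by blast
qed

lemma dlog_diff_cong_half:
  assumes "coprime x q" "coprime y q" and "[x + y = 0] (mod q)"
  shows "[int (dlog x) - int (dlog y) = 2 ^ (\<nu> - 1)] (mod 2 ^ \<nu>)"
proof -
  have "[int (dlog x) = int (totient q div 2 + dlog y)] (mod 2 ^ \<nu>)"
    using dlog_uminus[OF assms] by (rule cong_two_power_if_cong_totient)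
  then have "[int (dlog x) - int (dlog y) = int (totient q div 2)] (mod 2 ^ \<nu>)"
    by (simp add: cong_iff_dvd_diff algebra_simps)
  then show ?thesis
    using totient_half_cong by (rule cong_trans)
qed

end

lemma units_mod_eq_totatives: "n > 1 \<Longrightarrow> units_mod n = totatives n"
  by (auto simp: units_mod_def totatives_def order.order_iff_strict intro!: Nat.gr0I)

lemma card_totatives_mod_in:
  assumes "m1 > 1" "m2 > 0" "coprime m1 m2" "S \<subseteq> totatives m1"
  shows "card {x \<in> totatives (m1 * m2). x mod m1 \<in> S} = card S * totient m2"
proof (cases "m2 = 1")
  case True
  have "x mod m1 = x" if "x \<in> totatives m1" for x
    using that assms(1) by (cases "x = m1") (auto simp: totatives_def)
  with assms(4) True have "{x \<in> totatives (m1 * m2). x mod m1 \<in> S} = S"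
    by auto
  with True show ?thesis
    by simp
next
  case False
  let ?f = "\<lambda>x. (x mod m1, x mod m2)"
  have bij: "bij_betw ?f (totatives (m1 * m2)) (totatives m1 \<times> totatives m2)"
    using assms False by (intro bij_betw_totatives) auto
  have "{x \<in> totatives (m1 * m2). x mod m1 \<in> S} = {x \<in> totatives (m1 * m2). ?f x \<in> S \<times> totatives m2}"
    using bij by (auto simp: bij_betw_def)
  moreover have "?f ` {x \<in> totatives (m1 * m2). ?f x \<in> S \<times> totatives m2} = S \<times> totatives m2"
  proof (intro equalityI subsetI)
    fix z assume "z \<in> S \<times> totatives m2"
    moreover have "S \<times> totatives m2 \<subseteq> ?f ` totatives (m1 * m2)"
      using bij assms(4) by (auto simp: bij_betw_def)
    ultimately show "z \<in> ?f ` {x \<in> totatives (m1 * m2). ?f x \<in> S \<times> totatives m2}"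
      by auto
  qed auto
  ultimately have "bij_betw ?f {x \<in> totatives (m1 * m2). x mod m1 \<in> S} (S \<times> totatives m2)"
    by (metis (no_types, lifting) bij bij_betw_subset mem_Collect_eq subsetI)
  then show ?thesis
    by (simp add: bij_betw_same_card card_cartesian_product totient_def)
qed

lemma exists_cong_minus_quotient:
  fixes x y a :: nat
  assumes "a > 0" "coprime x a" "coprime y a"
  obtains h where "coprime h a" "[x + h * y = 0] (mod a)"
proof -
  obtain i where i: "[y * i = 1] (mod a)"
    using cong_solve_coprime_nat[OF assms(3)] by auto
  then have "coprime i a"
    by (metis cong_imp_coprime cong_sym coprime_1_left coprime_mult_left_iff)
  moreover have "coprime (a - 1) a"
    using assms(1) by (intro coprime_diff_one_left_nat) simp
  ultimately have "coprime ((a - 1) * x * i) a"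
    using assms(2) by simp
  moreover have "[x + ((a - 1) * x) * (y * i) = x + ((a - 1) * x) * 1] (mod a)"
    using i by (intro cong_add cong_mult cong_refl)
  then have "[x + (a - 1) * x * i * y = x + (a - 1) * x * 1] (mod a)"
    by (simp add: ac_simps)
  moreover have "x + (a - 1) * x * 1 = a * x"
    using assms(1) by (cases a) auto
  ultimately show ?thesis
    using that[of "(a - 1) * x * i"] by (simp add: cong_0_iff cong_dvd_iff)
qed

locale odd_prime_component =
  fixes a p g :: nat
  assumes a_pos: "a > 0" and prime_p: "prime p" and odd_p: "odd p" and p_dvd: "p dvd a"
    and primroot_ppart: "residue_primroot (ppart a p) g"
begin

lemma ppart_dvd: "ppart a p dvd a"
  unfolding ppart_def by (rule multiplicity_dvd)

lemma ppart_gt_2: "ppart a p > 2"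
proof -
  have "multiplicity p a \<ge> 1"
    using a_pos p_dvd prime_p by (intro multiplicity_geI) (auto simp: prime_gt_1_nat)
  then have "p ^ 1 \<le> ppart a p"
    unfolding ppart_def using prime_gt_0_nat[OF prime_p] by (intro power_increasing) auto
  moreover have "p \<noteq> 2"
    using odd_p by auto
  ultimately show ?thesis
    using prime_ge_2_nat[OF prime_p] by simp
qed

sublocale primitive_root "ppart a p" g
  using ppart_gt_2 primroot_ppart by unfold_locales

lemma coprime_ppart: "coprime x a \<Longrightarrow> coprime x (ppart a p)"
  using ppart_dvd by (auto intro: coprime_imp_coprime dvd_trans)

lemma mod_in_H_odd_iff:
  assumes "coprime x a"
  shows "x mod a \<in> H_odd a p \<longleftrightarrow> 2 ^ \<nu> dvd dlog x"
proof -
  have "x mod a \<in> units_mod a"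
    using assms a_pos by (simp add: units_mod_def)
  moreover have "ord (ppart a p) (x mod a) = ord (ppart a p) x"
    using ppart_dvd by (intro ord_cong) (simp add: cong_def mod_mod_cancel)
  ultimately show ?thesis
    using odd_ord_iff_dlog[OF coprime_ppart[OF assms]] by (simp add: H_odd_def)
qed

lemma card_H_odd: "card (H_odd a p) * 2 ^ \<nu> = totient a"
proof -
  let ?q = "ppart a p"
  let ?S = "{y \<in> totatives ?q. odd (ord ?q y)}"
  have a: "a = ?q * (a div ?q)"
    using ppart_dvd by simp
  have "\<not> p dvd a div ?q"
    unfolding ppart_def using a_pos prime_p by (intro multiplicity_decompose) (auto simp: not_prime_unit)
  then have "coprime ?q (a div ?q)"
    unfolding ppart_def using prime_p by (simp add: prime_imp_coprime)
  moreover have "a div ?q > 0"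
    using a_pos ppart_dvd ppart_gt_2 by (auto simp: div_greater_zero_iff dvd_imp_le)
  moreover have "H_odd a p = {x \<in> totatives (?q * (a div ?q)). x mod ?q \<in> ?S}"
  proof -
    have "x mod ?q \<in> totatives ?q" if "coprime x a" for x
      using coprime_ppart[OF that] ppart_gt_2 by (auto simp: totatives_def intro!: Nat.gr0I)
    moreover have "ord ?q (x mod ?q) = ord ?q x" for x
      by (intro ord_cong) (simp add: cong_def)
    moreover have "units_mod a = totatives a"
      using a_pos ppart_gt_2 ppart_dvd by (intro units_mod_eq_totatives) (auto dest: dvd_imp_le)
    ultimately show ?thesis
      unfolding H_odd_def by (auto simp: totatives_def simp flip: a)
  qed
  moreover have "card {x \<in> totatives (?q * (a div ?q)). x mod ?q \<in> ?S} = card ?S * totient (a div ?q)"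
    by (rule card_totatives_mod_in) (use ppart_gt_2 calculation in auto)
  ultimately have "card (H_odd a p) = card ?S * totient (a div ?q)"
    by (simp only:)
  moreover have "card ?S * 2 ^ multiplicity 2 (totient ?q) = totient ?q"
    by (simp add: card_odd_ord multiplicity_dvd)
  ultimately have "card (H_odd a p) * 2 ^ multiplicity 2 (totient ?q) = totient ?q * totient (a div ?q)"
    by (simp add: ac_simps)
  also have "\<dots> = totient a"
    using \<open>coprime ?q (a div ?q)\<close> by (subst (3) a) (simp add: totient_mult_coprime)
  finally show ?thesis .
qed

lemma m_of_eq:
  assumes "totient a = 2 ^ m_of a * card (H_odd a p)"
  shows "m_of a = \<nu>"
proof -
  have "card (H_odd a p) > 0"
    using assms a_pos by (cases "card (H_odd a p)") auto
  then have "(2::nat) ^ m_of a = 2 ^ \<nu>"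
    using assms card_H_odd[symmetric] by (simp add: ac_simps)
  then show ?thesis
    by simp
qed

end

context odd_prime_component
begin

lemma dlog_prod_mset_cong_filter:
  assumes "\<forall>r\<in>#F. coprime r a"
  shows "[int (dlog (\<Prod>\<^sub># F)) = (\<Sum>r\<in>#filter_mset (\<lambda>r. r mod a \<notin> H_odd a p) F. int (dlog r))]
           (mod 2 ^ \<nu>)"
proof -
  let ?M = "2 ^ \<nu> :: int"
  let ?N = "filter_mset (\<lambda>r. r mod a \<notin> H_odd a p) F" and ?C = "filter_mset (\<lambda>r. r mod a \<in> H_odd a p) F"
  have "[dlog (\<Prod>\<^sub># F) = (\<Sum>r\<in>#F. dlog r)] (mod totient (ppart a p))"
    using assms coprime_ppart by (intro dlog_prod_mset) auto
  then have "[int (dlog (\<Prod>\<^sub># F)) = (\<Sum>r\<in>#F. int (dlog r))] (mod int (totient (ppart a p)))"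
    by (simp flip: cong_int_iff add: image_mset.compositionality comp_def)
  then have "[int (dlog (\<Prod>\<^sub># F)) = (\<Sum>r\<in>#F. int (dlog r))] (mod ?M)"
    by (rule cong_dvd_modulus) (simp only: power2_dvd_int_iff multiplicity_dvd)
  also have "(\<Sum>r\<in>#F. int (dlog r)) = (\<Sum>r\<in>#?N. int (dlog r)) + (\<Sum>r\<in>#?C. int (dlog r))"
    by (induction F) auto
  also have "[\<dots> = (\<Sum>r\<in>#?N. int (dlog r)) + 0] (mod ?M)"
    using assms mod_in_H_odd_iff
    by (intro cong_add dvd_sum_mset[THEN cong_0_iff[THEN iffD2]]) (auto simp: power2_dvd_int_iff)
  finally show ?thesis
    by simp
qed

definition factors_outside_H :: "nat \<Rightarrow> nat multiset" where
  "factors_outside_H n = filter_mset (\<lambda>r. r mod a \<notin> H_odd a p) (prime_factorization n)"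

lemma signed_subsum_if_divisor_pair:
  assumes "n > 0" "coprime n a" and d: "d1 dvd n" "d2 dvd n" "a dvd d1 + d2"
  shows "\<exists>s. signed_subsum (image_mset (int \<circ> dlog) (factors_outside_H n)) s \<and> [s = 2 ^ (\<nu> - 1)] (mod 2 ^ \<nu>)"
proof -
  let ?N = "filter_mset (\<lambda>r. r mod a \<notin> H_odd a p)"
  have pos: "d1 > 0" "d2 > 0"
    using d \<open>n > 0\<close> by (auto intro!: Nat.gr0I)
  have sub: "prime_factorization d1 \<subseteq># prime_factorization n" "prime_factorization d2 \<subseteq># prime_factorization n"
    using pos d \<open>n > 0\<close> by (simp_all add: prime_factorization_subset_iff_dvd)
  have coprime_d: "coprime d a" if "d dvd n" for d
    using coprime_divisors[OF that dvd_refl \<open>coprime n a\<close>] .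
  then have coprime: "\<forall>r\<in>#prime_factorization d. coprime r a" if "d dvd n" for d
    using that coprime_if_in_prime_factorization by blast
  have "coprime d1 (ppart a p)" "coprime d2 (ppart a p)"
    using coprime_ppart coprime_d d by blast+
  moreover have "[d1 + d2 = 0] (mod ppart a p)"
    using dvd_trans[OF ppart_dvd d(3)] by (simp add: cong_0_iff)
  ultimately have "[int (dlog d1) - int (dlog d2) = 2 ^ (\<nu> - 1)] (mod 2 ^ \<nu>)"
    by (rule dlog_diff_cong_half)
  moreover have sum: "[(\<Sum>r\<in>#?N (prime_factorization d). int (dlog r)) = int (dlog d)] (mod 2 ^ \<nu>)"
    if "d dvd n" "d > 0" for d
    using dlog_prod_mset_cong_filter[OF coprime[OF that(1)]] that(2) by (simp add: cong_sym_eq)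
  ultimately have "[(\<Sum>r\<in>#?N (prime_factorization d1). int (dlog r)) - (\<Sum>r\<in>#?N (prime_factorization d2). int (dlog r))
      = 2 ^ (\<nu> - 1)] (mod 2 ^ \<nu>)"
    using cong_diff[OF sum[OF d(1) pos(1)] sum[OF d(2) pos(2)]] cong_trans by blast
  moreover have "image_mset (int \<circ> dlog) (?N (prime_factorization d)) \<subseteq># image_mset (int \<circ> dlog) (factors_outside_H n)"
    if "prime_factorization d \<subseteq># prime_factorization n" for d
    unfolding factors_outside_H_def using that by (intro image_mset_subseteq_mono multiset_filter_mono)
  then have "signed_subsum (image_mset (int \<circ> dlog) (factors_outside_H n))
      ((\<Sum>r\<in>#?N (prime_factorization d1). int (dlog r)) - (\<Sum>r\<in>#?N (prime_factorization d2). int (dlog r)))"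
    using signed_subsum_diff sub by (simp add: image_mset.compositionality comp_def)
  ultimately show ?thesis
    by blast
qed

lemma divisor_pair_if_signed_subsum:
  assumes "n > 0" "coprime n a" and cover: "H_odd a p \<subseteq> (\<lambda>r. r mod a) ` set_mset (prime_factorization n)"
    and s: "signed_subsum (image_mset (int \<circ> dlog) (factors_outside_H n)) s" "[s = 2 ^ (\<nu> - 1)] (mod 2 ^ \<nu>)"
  shows "\<exists>d1 d2. d1 dvd n \<and> d2 dvd n \<and> a dvd d1 + d2"
proof -
  let ?T = "factors_outside_H n"
  obtain A B where AB: "A + B \<subseteq># ?T" and s_eq: "s = (\<Sum>r\<in>#A. int (dlog r)) - (\<Sum>r\<in>#B. int (dlog r))"
    using s(1) unfolding signed_subsum_image_mset_iff by (auto simp: image_mset.compositionality comp_def)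
  have T_sub: "?T \<subseteq># prime_factorization n"
    unfolding factors_outside_H_def by simp
  then have A_sub: "A \<subseteq># prime_factorization n" and B_sub: "B \<subseteq># prime_factorization n"
    using AB by (meson mset_subset_eq_add_left mset_subset_eq_add_right subset_mset.order_trans)+
  have outside: "r mod a \<notin> H_odd a p" if "r \<in># A + B" for r
    using mset_subset_eqD[OF AB that] by (simp add: factors_outside_H_def)
  have coprime: "coprime r a" if "r \<in># prime_factorization n" for r
    using that \<open>coprime n a\<close> coprime_if_in_prime_factorization by blast
  have cA: "coprime (\<Prod>\<^sub># A) a" and cB: "coprime (\<Prod>\<^sub># B) a"
    using coprime A_sub B_sub by (auto intro!: prod_mset_coprime dest: mset_subset_eqD)
  obtain h where h: "coprime h a" "[\<Prod>\<^sub># A + h * \<Prod>\<^sub># B = 0] (mod a)"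
    using exists_cong_minus_quotient[OF a_pos cA cB] by blast
  have dlog_prod: "[int (dlog (\<Prod>\<^sub># M)) = (\<Sum>r\<in>#M. int (dlog r))] (mod 2 ^ \<nu>)"
    if "M \<subseteq># A + B" for M
  proof -
    have "M \<subseteq># prime_factorization n"
      using that AB T_sub by (meson subset_mset.order_trans)
    moreover have "filter_mset (\<lambda>r. r mod a \<notin> H_odd a p) M = M"
      using that outside by (subst filter_mset_eq_conv) (auto dest: mset_subset_eqD)
    ultimately show ?thesis
      using dlog_prod_mset_cong_filter[of M] coprime by (auto dest: mset_subset_eqD)
  qed
  let ?dA = "int (dlog (\<Prod>\<^sub># A))" and ?dB = "int (dlog (\<Prod>\<^sub># B))"
    and ?dhB = "int (dlog (h * \<Prod>\<^sub># B))" and ?dh = "int (dlog h)"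
  have "[\<Prod>\<^sub># A + h * \<Prod>\<^sub># B = 0] (mod ppart a p)"
    using h(2) ppart_dvd by (rule cong_dvd_modulus_nat)
  then have 1: "[?dA - ?dhB = 2 ^ (\<nu> - 1)] (mod 2 ^ \<nu>)"
    using h(1) cA cB coprime_ppart by (intro dlog_diff_cong_half) auto
  have 2: "[?dhB = ?dh + ?dB] (mod 2 ^ \<nu>)"
    using cong_two_power_if_cong_totient[OF dlog_mult] h(1) cB coprime_ppart by simp
  have 3: "[?dA - ?dB = s] (mod 2 ^ \<nu>)"
    unfolding s_eq using dlog_prod[of A] dlog_prod[of B] by (intro cong_diff) auto
  have "2 ^ \<nu> dvd (?dA - ?dB - s) - (?dA - ?dhB - 2 ^ (\<nu> - 1)) - (?dhB - (?dh + ?dB))"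
    using dvd_diff[OF dvd_diff[OF 3[unfolded cong_iff_dvd_diff] 1[unfolded cong_iff_dvd_diff]]
        2[unfolded cong_iff_dvd_diff]] .
  then have "[?dh = s - 2 ^ (\<nu> - 1)] (mod 2 ^ \<nu>)"
    by (simp add: cong_iff_dvd_diff algebra_simps)
  also have "[s - 2 ^ (\<nu> - 1) = 0] (mod 2 ^ \<nu>)"
    using s(2) by (simp add: cong_iff_dvd_diff)
  finally have "2 ^ \<nu> dvd dlog h"
    by (simp add: cong_0_iff power2_dvd_int_iff)
  then have "h mod a \<in> H_odd a p"
    using mod_in_H_odd_iff h(1) by simp
  then obtain r where r: "r \<in># prime_factorization n" "r mod a = h mod a"
    using cover by auto
  let ?C = "filter_mset (\<lambda>r. r mod a \<in> H_odd a p) (prime_factorization n)"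
  have "prime_factorization n = ?T + ?C"
    by (simp add: factors_outside_H_def multiset_eq_iff)
  moreover have "B \<subseteq># ?T"
    using AB by (meson mset_subset_eq_add_right subset_mset.order_trans)
  moreover have "{#r#} \<subseteq># ?C"
    using r \<open>h mod a \<in> H_odd a p\<close> by simp
  ultimately have "add_mset r B \<subseteq># prime_factorization n"
    by (metis add_mset_add_single subset_mset.add_mono)
  then have "\<Prod>\<^sub># A dvd n" "r * \<Prod>\<^sub># B dvd n"
    using A_sub prod_mset_subset_imp_dvd prod_mset_prime_factorization[of n] \<open>n > 0\<close> by fastforce+
  moreover have "[\<Prod>\<^sub># A + r * \<Prod>\<^sub># B = \<Prod>\<^sub># A + h * \<Prod>\<^sub># B] (mod a)"
    using r(2) by (intro cong_add cong_mult) (auto simp: cong_def)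
  then have "a dvd \<Prod>\<^sub># A + r * \<Prod>\<^sub># B"
    using h(2) by (simp add: cong_0_iff[symmetric] cong_trans)
  ultimately show ?thesis
    by blast
qed

lemma dlog_not_dvd_if_outside_H:
  assumes "coprime n a" "r \<in># factors_outside_H n"
  shows "\<not> 2 ^ \<nu> dvd int (dlog r)"
  using assms mod_in_H_odd_iff coprime_if_in_prime_factorization
  by (auto simp: factors_outside_H_def power2_dvd_int_iff)

lemma not_in_Estar_if_many_outside_H:
  assumes "n > 0" "coprime n a" "H_odd a p \<subseteq> (\<lambda>r. r mod a) ` set_mset (prime_factorization n)"
    and "2 ^ (\<nu> - 1) \<le> size (factors_outside_H n)"
  shows "n \<notin> Estar a"
proof -
  let ?X = "image_mset (int \<circ> dlog) (factors_outside_H n)"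
  have "\<forall>x\<in>#?X. \<not> 2 ^ \<nu> dvd x"
    using dlog_not_dvd_if_outside_H[OF assms(2)] by auto
  moreover have "2 ^ (\<nu> - 1) \<le> dyadic_weight ?X"
    using assms(4) size_le_dyadic_weight[of ?X] by simp
  ultimately obtain s where "signed_subsum ?X s" "[s = 2 ^ (\<nu> - 1)] (mod 2 ^ \<nu>)"
    using signed_subsum_cong_half_power nu_pos by blast
  then show ?thesis
    using divisor_pair_if_signed_subsum[OF assms(1-3)] not_in_Estar_iff[OF _ assms(1,2)] a_pos by simp
qed

lemma in_Estar_iff_cong_gpow_pm:
  assumes "n > 0" "coprime n a" "H_odd a p \<subseteq> (\<lambda>r. r mod a) ` set_mset (prime_factorization n)"
    and "\<nu> \<ge> 2" "size (factors_outside_H n) = 2 ^ (\<nu> - 1) - 1"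
  shows "n \<in> Estar a \<longleftrightarrow>
    (\<exists>e. odd e \<and> (\<forall>r\<in>#factors_outside_H n.
       \<exists>e'. cong_gpow (ppart a p) g e' r \<and> ([e' = e] (mod 2 ^ \<nu>) \<or> [e' = - e] (mod 2 ^ \<nu>))))"
proof -
  let ?X = "image_mset (int \<circ> dlog) (factors_outside_H n)"
  have "n \<in> Estar a \<longleftrightarrow> \<not> (\<exists>d1 d2. d1 dvd n \<and> d2 dvd n \<and> a dvd d1 + d2)"
    using not_in_Estar_iff[OF _ assms(1,2)] a_pos by auto
  also have "\<dots> \<longleftrightarrow> \<not> (\<exists>s. signed_subsum ?X s \<and> [s = 2 ^ (\<nu> - 1)] (mod 2 ^ \<nu>))"
    using divisor_pair_if_signed_subsum[OF assms(1-3)] signed_subsum_if_divisor_pair[OF assms(1,2)] by blast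
  also have "\<dots> \<longleftrightarrow> (\<exists>e. odd e \<and> (\<forall>x\<in>#?X. [x = e] (mod 2 ^ \<nu>) \<or> [x = - e] (mod 2 ^ \<nu>)))"
    using signed_subsum_cong_half_power_iff[of \<nu> ?X] dlog_not_dvd_if_outside_H[OF assms(2)] assms(4,5) by auto
  also have "\<dots> \<longleftrightarrow> (\<exists>e. odd e \<and> (\<forall>r\<in>#factors_outside_H n.
       \<exists>e'. cong_gpow (ppart a p) g e' r \<and> ([e' = e] (mod 2 ^ \<nu>) \<or> [e' = - e] (mod 2 ^ \<nu>))))"
  proof -
    have "coprime r (ppart a p)" if "r \<in># factors_outside_H n" for r
      using that coprime_ppart coprime_if_in_prime_factorization[OF assms(2)]
      by (simp add: factors_outside_H_def)
    then show ?thesis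
      by (simp add: cong_gpow_pm_iff)
  qed
  finally show ?thesis .
qed

end

lemma index_two_subgroup_mult_mod:
  fixes Q :: nat
  assumes Q: "Q > 1" and S: "S \<subseteq> units_mod Q" "1 \<in> S" "\<forall>x\<in>S. \<forall>y\<in>S. x * y mod Q \<in> S"
    and card_S: "2 * card S = totient Q"
    and x: "x \<in> units_mod Q" "x \<notin> S" and y: "y \<in> units_mod Q" "y \<notin> S"
  shows "x * y mod Q \<in> S"
proof -
  have U: "units_mod Q = totatives Q"
    using Q by (rule units_mod_eq_totatives)
  have unit: "u < Q" "coprime u Q" if "u \<in> units_mod Q" for u
    using that by (auto simp: units_mod_def)
  have pow: "s ^ Suc k mod Q \<in> S" if "s \<in> S" for s k
  proof (induction k)
    case 0
    then show ?case using that S(1) unit by auto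
  next
    case (Suc k)
    then have "(s ^ Suc k mod Q) * s mod Q \<in> S"
      using that S(3) by blast
    then show ?case
      by (metis mod_mult_left_eq power_Suc2)
  qed
  have "finite S"
    using S(1) U finite_subset[of S "totatives Q"] by simp
  then have "card S \<ge> 1"
    using S(2) by (simp add: Suc_le_eq card_gt_0_iff) blast
  then have "totient Q \<ge> 2"
    using card_S by linarith
  have inverse: "\<exists>t\<in>S. [s * t = 1] (mod Q)" if "s \<in> S" for s
  proof
    show "s ^ (totient Q - 1) mod Q \<in> S"
      using pow[OF that, of "totient Q - 2"] \<open>totient Q \<ge> 2\<close> by (simp add: Suc_diff_Suc numeral_2_eq_2)
    have "[s ^ totient Q = 1] (mod Q)"
      using that S(1) unit by (intro euler_theorem) auto
    moreover have "s * s ^ (totient Q - 1) = s ^ totient Q"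
      using \<open>totient Q \<ge> 2\<close> by (cases "totient Q") simp_all
    ultimately show "[s * (s ^ (totient Q - 1) mod Q) = 1] (mod Q)"
      by (simp add: cong_def mod_mult_right_eq)
  qed
  let ?m = "\<lambda>u. x * u mod Q"
  have image_sub: "?m ` S \<subseteq> units_mod Q - S"
  proof
    fix u assume "u \<in> ?m ` S"
    then obtain s where s: "s \<in> S" "u = x * s mod Q" by blast
    have "coprime s Q"
      using s(1) S(1) unit by blast
    then have "u \<in> units_mod Q"
      using s(2) unit(2)[OF x(1)] Q by (simp add: units_mod_def)
    moreover have "u \<notin> S"
    proof
      assume "u \<in> S"
      obtain t where t: "t \<in> S" "[s * t = 1] (mod Q)"
        using inverse[OF s(1)] by blast
      have "[u * t = x * (s * t)] (mod Q)"
        unfolding s(2) by (simp add: cong_def mod_mult_left_eq mult.assoc)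
      also have "[x * (s * t) = x * 1] (mod Q)"
        using t(2) by (intro cong_mult cong_refl)
      finally have "x = u * t mod Q"
        using unit[OF x(1)] by (simp add: cong_def)
      then show False
        using S(3) \<open>u \<in> S\<close> t(1) x(2) by auto
    qed
    ultimately show "u \<in> units_mod Q - S" by blast
  qed
  have "inj_on ?m S"
  proof
    fix s t assume "s \<in> S" "t \<in> S" "?m s = ?m t"
    then have "[s = t] (mod Q)"
      using unit[OF x(1)] by (simp add: cong_def[symmetric] cong_mult_lcancel_nat)
    moreover have "s < Q" "t < Q"
      using \<open>s \<in> S\<close> \<open>t \<in> S\<close> S(1) unit by blast+
    ultimately show "s = t"
      by (rule cong_less_modulus_unique_nat)
  qed
  then have "card (?m ` S) = card (units_mod Q - S)"
    using card_S S(1) U \<open>finite S\<close> by (simp add: card_image card_Diff_subset totient_def)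
  then have image: "?m ` S = units_mod Q - S"
    using card_subset_eq[OF _ image_sub] U by simp
  have xy: "x * y mod Q \<in> units_mod Q"
    using unit(2)[OF x(1)] unit(2)[OF y(1)] Q by (simp add: units_mod_def)
  show ?thesis
  proof (rule ccontr)
    assume "x * y mod Q \<notin> S"
    then obtain s where "s \<in> S" "x * y mod Q = x * s mod Q"
      using image xy by blast
    then have "[y = s] (mod Q)"
      using unit[OF x(1)] by (simp add: cong_def[symmetric] cong_mult_lcancel_nat)
    moreover have "y < Q" "s < Q"
      using \<open>s \<in> S\<close> y(1) S(1) unit by blast+
    ultimately have "y = s"
      by (rule cong_less_modulus_unique_nat)
    then show False
      using \<open>s \<in> S\<close> y(2) by simp
  qed
qed

lemma not_in_Estar_if_outside_H0:
  fixes a n r :: nat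
  assumes "a > 0" "n > 0" "coprime n a" "gamma0 a \<ge> 2" "admissible_H0 a S"
    and H: "H = {x \<in> units_mod a. x mod 2 ^ gamma0 a \<in> S}"
    and cover: "H \<subseteq> (\<lambda>r. r mod a) ` set_mset (prime_factorization n)"
    and r: "r \<in># prime_factorization n" "r mod a \<notin> H"
  shows "n \<notin> Estar a"
proof -
  define Q where "Q = (2::nat) ^ gamma0 a"
  have Q_dvd: "Q dvd a"
    unfolding Q_def gamma0_def by (rule multiplicity_dvd)
  have "(2::nat) ^ 2 \<le> Q"
    unfolding Q_def using assms(4) by (intro power_increasing) auto
  then have Q: "Q > 1"
    by simp
  have S: "S \<subseteq> units_mod Q" "1 \<in> S" "\<forall>x\<in>S. \<forall>y\<in>S. x * y mod Q \<in> S" "2 * card S = totient Q" "Q - 1 \<notin> S"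
    using assms(5) unfolding admissible_H0_def Q_def Let_def by auto
  have ra: "coprime r a"
    using coprime_if_in_prime_factorization[OF assms(3) r(1)] .
  have r_unit: "r mod Q \<in> units_mod Q"
    using ra coprime_imp_coprime[of r Q] Q_dvd Q by (auto simp: units_mod_def intro: dvd_trans)
  have "r mod a \<in> units_mod a"
    using ra assms(1) by (simp add: units_mod_def)
  then have r_notin: "r mod Q \<notin> S"
    using r(2) Q_dvd unfolding H Q_def by (simp add: mod_mod_cancel)
  have "Q - 1 \<in> units_mod Q"
    using Q coprime_diff_one_left_nat[of Q] by (simp add: units_mod_def)
  then have minus_r: "r mod Q * (Q - 1) mod Q \<in> S"
    using index_two_subgroup_mult_mod[OF Q S(1-4) r_unit r_notin _ S(5)] by blast
  define h where "h = (a - 1) * r mod a"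
  have "h \<in> units_mod a"
    using ra assms(1) coprime_diff_one_left_nat[of a] by (simp add: h_def units_mod_def)
  moreover have "[(a - 1) * r = (Q - 1) * (r mod Q)] (mod Q)"
  proof -
    have "[a - 1 + 1 = Q - 1 + 1] (mod Q)"
      using Q_dvd Q assms(1) by (simp add: cong_def)
    then have "[a - 1 = Q - 1] (mod Q)"
      by (simp only: cong_add_rcancel_nat)
    then show ?thesis
      by (intro cong_mult) (auto simp: cong_def)
  qed
  then have "h mod Q = r mod Q * (Q - 1) mod Q"
    unfolding h_def using Q_dvd by (simp add: cong_def mod_mod_cancel ac_simps)
  ultimately have "h \<in> H"
    using minus_r unfolding H Q_def by simp
  then obtain r' where r': "r' \<in># prime_factorization n" "r' mod a = h"
    using cover by auto
  have "a dvd r + r'"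
  proof -
    have "[r + r' = r + (a - 1) * r] (mod a)"
      using r'(2) by (intro cong_add) (auto simp: h_def cong_def)
    moreover have "r + (a - 1) * r = a * r"
      using assms(1) by (cases a) auto
    ultimately show ?thesis
      by (simp add: cong_0_iff[symmetric] cong_def)
  qed
  moreover have "r dvd n" "r' dvd n"
    using r(1) r'(1) by auto
  ultimately show ?thesis
    using not_in_Estar_iff[of a n] assms(1-3) by auto
qed

lemma m_of_le_1: "gamma0 a \<ge> 2 \<Longrightarrow> m_of a \<le> 1"
proof -
  assume "gamma0 a \<ge> 2"
  then have "Gcd ({delta_of a} \<union> {p - 1 | p. prime p \<and> odd p \<and> p dvd a}) dvd 2"
    by (intro Gcd_dvd) (simp add: delta_of_def)
  then have "m_of a \<le> multiplicity 2 (2::nat)"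
    unfolding m_of_def by (intro dvd_imp_multiplicity_le) auto
  then show ?thesis
    by simp
qed

lemma ppart_residue_primroot_exists:
  assumes "a > 0" "prime p" "odd p" "p dvd a"
  obtains g where "residue_primroot (ppart a p) g"
proof -
  obtain g where g: "\<forall>k>0. residue_primroot (p ^ k) g"
    using residue_primroot_odd_prime_power_exists[OF assms(2,3)] by blast
  have "p ^ 1 dvd a"
    using assms(4) by simp
  then have "multiplicity p a \<ge> 1"
    using assms(1,2) by (intro multiplicity_geI) (auto simp: not_prime_unit)
  then show ?thesis
    using g[rule_format, of "multiplicity p a"] that unfolding ppart_def by simp
qed

theorem lemma2p9:
  fixes a n :: nat and H :: "nat set"
  assumes a3: "a \<ge> 3"
    and HH: "H \<in> frakH a"
    and npos: "n > 0"
    and cop: "gcd n a = 1"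
    and cover: "H \<subseteq> (\<lambda>r. r mod a) ` set_mset (prime_factorization n)"
  shows
    "(size (filter_mset (\<lambda>r. r mod a \<notin> H) (prime_factorization n)) \<ge> 2 ^ (m_of a - 1)
        \<longrightarrow> n \<notin> Estar a)
     \<and>
     (size (filter_mset (\<lambda>r. r mod a \<notin> H) (prime_factorization n)) = 2 ^ (m_of a - 1) - 1
        \<and> m_of a \<ge> 2 \<longrightarrow>
        (gamma0 a \<le> 1 \<and> (\<exists>p. prime p \<and> odd p \<and> p dvd a \<and> H = H_odd a p)) \<and>
        (\<forall>p g. prime p \<and> odd p \<and> p dvd a \<and> H = H_odd a p \<and> residue_primroot (ppart a p) g \<longrightarrow>
           (n \<in> Estar a \<longleftrightarrow>
              (\<exists>e::int. odd e \<and>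
                 (\<forall>r \<in># filter_mset (\<lambda>r. r mod a \<notin> H) (prime_factorization n).
                    \<exists>e'::int. cong_gpow (ppart a p) g e' r \<and>
                      ([e' = e] (mod 2 ^ m_of a) \<or> [e' = - e] (mod 2 ^ m_of a)))))))"
proof -
  have card: "totient a = 2 ^ m_of a * card H"
    and cases: "(\<exists>p. prime p \<and> odd p \<and> p dvd a \<and> H = H_odd a p) \<or>
      (gamma0 a \<ge> 2 \<and> (\<exists>S. admissible_H0 a S \<and> H = {x \<in> units_mod a. x mod 2 ^ gamma0 a \<in> S}))"
    using HH unfolding frakH_def by blast+
  have coprime: "coprime n a"
    using cop by (rule coprime_iff_gcd_eq_1[THEN iffD2])
  have component: "odd_prime_component a p g"
    if "prime p" "odd p" "p dvd a" "residue_primroot (ppart a p) g" for p g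
    using that a3 by unfold_locales auto
  let ?T = "filter_mset (\<lambda>r. r mod a \<notin> H) (prime_factorization n)"
  show ?thesis
  proof (intro conjI impI)
    assume many: "size ?T \<ge> 2 ^ (m_of a - 1)"
    from cases show "n \<notin> Estar a"
    proof (elim disjE exE conjE)
      fix p assume p: "prime p" "odd p" "p dvd a" "H = H_odd a p"
      obtain g where "residue_primroot (ppart a p) g"
        using ppart_residue_primroot_exists[of a p] p a3 by auto
      then interpret odd_prime_component a p g
        using component p by blast
      show ?thesis
        using not_in_Estar_if_many_outside_H[OF npos coprime] cover many m_of_eq card p(4)
        by (simp add: factors_outside_H_def)
    next
      fix S assume H0: "gamma0 a \<ge> 2" "admissible_H0 a S" "H = {x \<in> units_mod a. x mod 2 ^ gamma0 a \<in> S}"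
      have "1 \<le> size ?T"
        using many one_le_power[of "2::nat" "m_of a - 1"] by linarith
      then obtain r where "r \<in># ?T"
        by (metis multiset_nonemptyE not_one_le_zero size_empty)
      then show ?thesis
        using not_in_Estar_if_outside_H0[OF _ npos coprime H0 cover] a3 by auto
    qed
  next
    assume few: "size ?T = 2 ^ (m_of a - 1) - 1 \<and> m_of a \<ge> 2"
    then show gamma: "gamma0 a \<le> 1"
      using m_of_le_1[of a] by linarith
    with cases show "\<exists>p. prime p \<and> odd p \<and> p dvd a \<and> H = H_odd a p"
      by auto
  next
    assume few: "size ?T = 2 ^ (m_of a - 1) - 1 \<and> m_of a \<ge> 2"
    show "\<forall>p g. prime p \<and> odd p \<and> p dvd a \<and> H = H_odd a p \<and> residue_primroot (ppart a p) g \<longrightarrow>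
           (n \<in> Estar a \<longleftrightarrow>
              (\<exists>e::int. odd e \<and>
                 (\<forall>r \<in># ?T. \<exists>e'::int. cong_gpow (ppart a p) g e' r \<and>
                      ([e' = e] (mod 2 ^ m_of a) \<or> [e' = - e] (mod 2 ^ m_of a)))))"
    proof (intro allI impI, elim conjE)
      fix p g assume p: "prime p" "odd p" "p dvd a" "H = H_odd a p" "residue_primroot (ppart a p) g"
      interpret odd_prime_component a p g
        using component p by blast
      have "m_of a = \<nu>"
        using m_of_eq card p(4) by simp
      then show "n \<in> Estar a \<longleftrightarrow> (\<exists>e::int. odd e \<and> (\<forall>r \<in># ?T. \<exists>e'::int. cong_gpow (ppart a p) g e' r \<and>
                      ([e' = e] (mod 2 ^ m_of a) \<or> [e' = - e] (mod 2 ^ m_of a))))"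
        using in_Estar_iff_cong_gpow_pm[OF npos coprime] cover few p(4) by (simp add: factors_outside_H_def)
    qed
  qed
qed

end
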